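(* Let $n \ge 1$ be an integer and let $k$ be an integer with $0 \le k \le \lfloor n/2 \rfloor$. Let $b_k \in B_{2n}$ be the $k$-th decreasing product component. Then the left and right derived braids of $b_k$ coincide: $L(b_k) = R(b_k)$ in $B_{3n}$.
   Context: $B_m$ denotes the Artin braid group on $m$ strands, with standard generators $\sigma_1,\dots,\sigma_{m-1}$ ($\sigma_i$ crosses the strands in positions $i$ and $i+1$; all generators are taken with the same crossing type). Braids are drawn top to bottom, and the product $xy$ means $x$ followed (below) by $y$. For braids $x\in B_a$, $y \in B_b$, $x\otimes y \in B_{a+b}$ denotes placing $y$ to the right of $x$; $\mathrm{id}_m$ is the trivial braid on $m$ strands. Cabling: given $y \in B_m$ and positive integers $w_1,\dots,w_m$ with $\sum w_i = N$, the cabled braid $y^{(w_1,\dots,w_m)} \in B_N$ is obtained by replacing the strand of $y$ starting at position $i$ (at the top) by a ribbon of $w_i$ parallel adjacent strands (a "$w_i$-ribbon") that follows that strand throughout. Derived braids: for $x \in B_{2n}$, the left derived braid is $Lx = (x\otimes \mathrm{id}_n)\cdot x^{(2,\dots,2,1,\dots,1)} \in B_{3n}$, where there are $n$ entries $2$ followed by $n$ entries $1$; i.e. one attaches $n$ identity strands on the right of $x$, then at the bottom of $x$ groups its $2n$ strands into $n$ consecutive pairs (2-ribbons), and braids the resulting $2n$ objects ($n$ 2-ribbons followed by $n$ single strands) according to $x$. The right derived braid is $Rx = (\mathrm{id}_n \otimes x)\cdot x^{(1,\dots,1,2,\dots,2)} \in B_{3n}$ ($n$ entries $1$ followed by $n$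 entries $2$), i.e. the same construction with the $n$ identity strands attached on the left. (For $n=1$, $x=\sigma_1$, the equation $Lx=Rx$ is the Yang–Baxter equation $\sigma_1\sigma_2\sigma_1=\sigma_2\sigma_1\sigma_2$.) Decreasing product components in $B_{2n}$: $b_0 = \sigma_1^{(n,n)}$, the braid in which the $n$-ribbon of strands $1,\dots,n$ crosses the $n$-ribbon of strands $n+1,\dots,2n$; and for $1 \le k \le \lfloor n/2\rfloor$, $b_k = \sigma_2^{(k,\,n-k,\,n-k,\,k)}$, where $\sigma_2\in B_4$, i.e. with strands grouped into consecutive ribbons of widths $k, n-k, n-k, k$, the two middle $(n-k)$-ribbons cross once and the outer $k$-ribbons are identity. *)

theory Defs
  imports Main
begin

text \<open>Braid words: a letter (i, True) is sigma_i, (i, False) is sigma_i inverse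
  (indices 1-based). A word is read top to bottom (left to right).\<close>

type_synonym bword = "(nat \<times> bool) list"

definition valid_word :: "nat \<Rightarrow> bword \<Rightarrow> bool" where
  "valid_word m w \<longleftrightarrow> (\<forall>l \<in> set w. 1 \<le> fst l \<and> fst l < m)"

inductive braid_eq :: "nat \<Rightarrow> bword \<Rightarrow> bword \<Rightarrow> bool" for m where
  refl: "valid_word m w \<Longrightarrow> braid_eq m w w"
| sym: "braid_eq m u v \<Longrightarrow> braid_eq m v u"
| trans: "braid_eq m u v \<Longrightarrow> braid_eq m v w \<Longrightarrow> braid_eq m u w"
| cong: "braid_eq m u v \<Longrightarrow> valid_word m a \<Longrightarrow> valid_word m c
          \<Longrightarrow> braid_eq m (a @ u @ c) (a @ v @ c)"
| cancel: "1 \<le> i \<Longrightarrow> i < m \<Longrightarrow> braid_eq m [(i, b), (i, \<not> b)] []"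
| far_comm: "1 \<le> i \<Longrightarrow> i + 1 < j \<Longrightarrow> j < m
          \<Longrightarrow> braid_eq m [(i, True), (j, True)] [(j, True), (i, True)]"
| braid_rel: "1 \<le> i \<Longrightarrow> i + 1 < m
          \<Longrightarrow> braid_eq m [(i, True), (i+1, True), (i, True)] [(i+1, True), (i, True), (i+1, True)]"

definition inv_word :: "bword \<Rightarrow> bword" where
  "inv_word w = map (\<lambda>(i, b). (i, \<not> b)) (rev w)"

text \<open>Positive crossing of a p-ribbon (positions s+1..s+p) over/under a q-ribbon
  (positions s+p+1..s+p+q), all crossings of the same type as the generators:
  the strands of the left ribbon, rightmost first, are each moved right across
  the q strands.\<close>

definition ribbon_cross :: "nat \<Rightarrow> nat \<Rightarrow> nat \<Rightarrow> bword" where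
  "ribbon_cross s p q = concat (map (\<lambda>j. map (\<lambda>t. (s + j + t, True)) [1..<q+1]) (rev [0..<p]))"

text \<open>Cabling of a single letter, given the current widths ws (ws ! (j-1) is the
  width of the ribbon at position j just above the letter).\<close>

definition letter_cable :: "nat list \<Rightarrow> nat \<times> bool \<Rightarrow> bword" where
  "letter_cable ws l = (let i = fst l; s = sum_list (take (i - 1) ws);
       p = ws ! (i - 1); q = ws ! i
     in if snd l then ribbon_cross s p q else inv_word (ribbon_cross s q p))"

definition swap_widths :: "nat list \<Rightarrow> nat \<Rightarrow> nat list" where
  "swap_widths ws i = ws[i - 1 := ws ! i, i := ws ! (i - 1)]"

text \<open>cable y ws = y^(w_1,...,w_m): the strand starting at (top) position j becomes
  a ribbon of width ws ! (j-1).\<close>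

fun cable :: "bword \<Rightarrow> nat list \<Rightarrow> bword" where
  "cable [] ws = []"
| "cable (l # w) ws = letter_cable ws l @ cable w (swap_widths ws (fst l))"

definition shift_word :: "nat \<Rightarrow> bword \<Rightarrow> bword" where
  "shift_word n w = map (\<lambda>(i, b). (i + n, b)) w"

definition left_derived :: "nat \<Rightarrow> bword \<Rightarrow> bword" where
  "left_derived n x = x @ cable x (replicate n 2 @ replicate n 1)"

definition right_derived :: "nat \<Rightarrow> bword \<Rightarrow> bword" where
  "right_derived n x = shift_word n x @ cable x (replicate n 1 @ replicate n 2)"

definition dpc :: "nat \<Rightarrow> nat \<Rightarrow> bword" where
  "dpc n k = (if k = 0 then cable [(1, True)] [n, n]
              else cable [(2, True)] [k, n - k, n - k, k])"

end

theory Submission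
  imports Defs
begin

text \<open>Write A(s, p, q) for the positive crossing of the p-ribbon at positions s+1..s+p
  over the q-ribbon to its right, and put m = n - k, d = n - 2k. Then b_k = A(k, m, m), and
  cabling a ribbon crossing yields the ribbon crossing of the summed widths, so
  L(b_k) = A(k, m, m) A(2k, 2m, m) and R(b_k) = A(2k+m, m, m) A(k, m, 2m).
  Splitting the wide ribbons into ribbons of widths k, m and d and using far commutations,
  both sides become a common prefix followed by the two sides of the Yang-Baxter relation
  for ribbons of widths m, d, m. That relation holds because ribbon crossings are natural:
  a positive braid on the strands of the left ribbon slides through the crossing.\<close>

lemma valid_word_Nil [simp]: "valid_word M []"
  by (simp add: valid_word_def)

lemma valid_word_Cons [simp]:
  "valid_word M (l # w) \<longleftrightarrow> 1 \<le> fst l \<and> fst l < M \<and> valid_word M w"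
  by (auto simp: valid_word_def)

lemma valid_word_append [simp]:
  "valid_word M (u @ v) \<longleftrightarrow> valid_word M u \<and> valid_word M v"
  by (auto simp: valid_word_def)

lemma braid_eq_valid: "braid_eq M u v \<Longrightarrow> valid_word M u \<and> valid_word M v"
  by (induction rule: braid_eq.induct) (auto simp: valid_word_def)

declare braid_eq.trans [trans]

lemma braid_eq_append:
  assumes "braid_eq M u u'" and "braid_eq M v v'"
  shows "braid_eq M (u @ v) (u' @ v')"
proof -
  have "braid_eq M ([] @ u @ v) ([] @ u' @ v)"
    using assms braid_eq_valid by (intro braid_eq.cong) auto
  moreover have "braid_eq M (u' @ v @ []) (u' @ v' @ [])"
    using assms braid_eq_valid by (intro braid_eq.cong) auto
  ultimately show ?thesis
    using braid_eq.trans by fastforce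
qed

lemma braid_eq_append_left:
  "braid_eq M v v' \<Longrightarrow> valid_word M u \<Longrightarrow> braid_eq M (u @ v) (u @ v')"
  by (rule braid_eq_append[OF braid_eq.refl])

lemma braid_eq_append_right:
  "braid_eq M u u' \<Longrightarrow> valid_word M v \<Longrightarrow> braid_eq M (u @ v) (u' @ v)"
  by (rule braid_eq_append[OF _ braid_eq.refl])

definition positive_word_on :: "nat set \<Rightarrow> bword \<Rightarrow> bool" where
  "positive_word_on A w \<longleftrightarrow> (\<forall>l \<in> set w. snd l \<and> fst l \<in> A)"

lemma positive_word_on_Nil [simp]: "positive_word_on A []"
  by (simp add: positive_word_on_def)

lemma positive_word_on_Cons [simp]:
  "positive_word_on A (l # w) \<longleftrightarrow> snd l \<and> fst l \<in> A \<and> positive_word_on A w"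
  by (auto simp: positive_word_on_def)

lemma positive_word_on_append [simp]:
  "positive_word_on A (u @ v) \<longleftrightarrow> positive_word_on A u \<and> positive_word_on A v"
  by (auto simp: positive_word_on_def)

lemma positive_word_on_mono: "positive_word_on A w \<Longrightarrow> A \<subseteq> B \<Longrightarrow> positive_word_on B w"
  by (auto simp: positive_word_on_def)

lemma positive_word_on_valid: "positive_word_on A w \<Longrightarrow> A \<subseteq> {0<..<M} \<Longrightarrow> valid_word M w"
  by (auto simp: positive_word_on_def valid_word_def)

lemma braid_eq_far_commute:
  assumes "i + 1 < j \<or> j + 1 < i" "i \<in> {0<..<M}" "j \<in> {0<..<M}"
  shows "braid_eq M [(i, True), (j, True)] [(j, True), (i, True)]"
  using assms braid_eq.far_comm[of i j M] braid_eq.far_comm[of j i M] braid_eq.sym by auto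

definition far_apart :: "nat set \<Rightarrow> nat set \<Rightarrow> bool" where
  "far_apart A B \<longleftrightarrow> (\<forall>i \<in> A. \<forall>j \<in> B. i + 1 < j \<or> j + 1 < i)"

lemma braid_eq_commute_letter:
  assumes "positive_word_on B w" "far_apart {i} B" "insert i B \<subseteq> {0<..<M}"
  shows "braid_eq M ((i, True) # w) (w @ [(i, True)])"
  using assms
proof (induction w)
  case Nil
  then show ?case by (auto intro: braid_eq.refl)
next
  case (Cons l w)
  then obtain j where l: "l = (j, True)" and j: "j \<in> B"
    by (cases l) auto
  have "valid_word M w"
    using Cons.prems by (auto intro: positive_word_on_valid)
  moreover have "braid_eq M [(i, True), (j, True)] [(j, True), (i, True)]"
    using Cons.prems j by (intro braid_eq_far_commute) (auto simp: far_apart_def)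
  ultimately have "braid_eq M ((i, True) # (j, True) # w) ((j, True) # (i, True) # w)"
    using braid_eq_append_right by fastforce
  also have "braid_eq M ... ((j, True) # w @ [(i, True)])"
    using braid_eq_append_left[OF Cons.IH, of "[(j, True)]"] Cons.prems j by auto
  finally show ?case
    using l by simp
qed

lemma braid_eq_commute:
  assumes "positive_word_on A u" "positive_word_on B v" "far_apart A B" "A \<union> B \<subseteq> {0<..<M}"
  shows "braid_eq M (u @ v) (v @ u)"
  using assms(1)
proof (induction u)
  case Nil
  then show ?case
    using assms by (auto intro!: braid_eq.refl positive_word_on_valid)
next
  case (Cons l u)
  then obtain i where l: "l = (i, True)" and i: "i \<in> A"
    by (cases l) auto
  have "braid_eq M ((i, True) # u @ v) ((i, True) # v @ u)"
    using braid_eq_append_left[OF Cons.IH, of "[(i, True)]"] Cons.prems i assms(4) by auto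
  also have "braid_eq M ... ((v @ [(i, True)]) @ u)"
  proof -
    have "braid_eq M ((i, True) # v) (v @ [(i, True)])"
      using assms i by (intro braid_eq_commute_letter) (auto simp: far_apart_def)
    moreover have "valid_word M u"
      using Cons.prems assms(4) by (auto intro: positive_word_on_valid)
    ultimately show ?thesis
      using braid_eq_append_right by fastforce
  qed
  finally show ?case
    using l by simp
qed

definition strand_cross :: "nat \<Rightarrow> nat \<Rightarrow> bword" where
  "strand_cross a q = map (\<lambda>t. (a + t, True)) [1..<q+1]"

lemma strand_cross_0 [simp]: "strand_cross a 0 = []"
  by (simp add: strand_cross_def)

lemma strand_cross_Suc: "strand_cross a (Suc q) = strand_cross a q @ [(a + Suc q, True)]"
  by (simp add: strand_cross_def)

lemma strand_cross_add: "strand_cross a (q1 + q2) = strand_cross a q1 @ strand_cross (a + q1) q2"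
  by (induction q2) (simp_all add: strand_cross_Suc add.assoc)

lemma positive_word_on_strand_cross: "positive_word_on {a<..a+q} (strand_cross a q)"
  by (auto simp: strand_cross_def positive_word_on_def)

lemma ribbon_cross_eq_concat:
  "ribbon_cross s p q = concat (map (\<lambda>j. strand_cross (s + j) q) (rev [0..<p]))"
  by (simp add: ribbon_cross_def strand_cross_def add.assoc)

lemma ribbon_cross_0 [simp]: "ribbon_cross s 0 q = []"
  by (simp add: ribbon_cross_eq_concat)

lemma ribbon_cross_Suc: "ribbon_cross s (Suc p) q = strand_cross (s + p) q @ ribbon_cross s p q"
  by (simp add: ribbon_cross_eq_concat)

lemma ribbon_cross_right_0 [simp]: "ribbon_cross s p 0 = []"
  by (induction p) (simp_all add: ribbon_cross_Suc)

lemma ribbon_cross_add: "ribbon_cross s (p1 + p2) q = ribbon_cross (s + p1) p2 q @ ribbon_cross s p1 q"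
  by (induction p2) (simp_all add: ribbon_cross_Suc add.assoc)

lemma positive_word_on_ribbon_cross: "positive_word_on {s<..<s+p+q} (ribbon_cross s p q)"
proof (induction p)
  case (Suc p)
  have "positive_word_on {s<..<s + Suc p + q} (strand_cross (s + p) q)"
    using positive_word_on_strand_cross by (rule positive_word_on_mono) auto
  moreover have "positive_word_on {s<..<s + Suc p + q} (ribbon_cross s p q)"
    using Suc by (rule positive_word_on_mono) auto
  ultimately show ?case
    by (simp add: ribbon_cross_Suc)
qed simp

lemma ribbon_cross_valid: "s + p + q \<le> M \<Longrightarrow> valid_word M (ribbon_cross s p q)"
  by (rule positive_word_on_valid[OF positive_word_on_ribbon_cross]) auto

lemma ribbon_cross_split_right:
  assumes "s + p + q1 + q2 \<le> M"
  shows "braid_eq M (ribbon_cross s p (q1 + q2)) (ribbon_cross s p q1 @ ribbon_cross (s + q1) p q2)"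
  using assms
proof (induction p)
  case 0
  then show ?case by (simp add: braid_eq.refl)
next
  case (Suc p)
  define X1 X2 where "X1 = strand_cross (s + p) q1" and "X2 = strand_cross (s + p + q1) q2"
  have valid: "valid_word M X1" "valid_word M X2" "valid_word M (ribbon_cross (s + q1) p q2)"
    unfolding X1_def X2_def using Suc.prems
    by (auto intro!: ribbon_cross_valid positive_word_on_valid[OF positive_word_on_strand_cross])
  have "ribbon_cross s (Suc p) (q1 + q2) = X1 @ X2 @ ribbon_cross s p (q1 + q2)"
    by (simp add: X1_def X2_def ribbon_cross_Suc strand_cross_add)
  also have "braid_eq M ... (X1 @ (X2 @ ribbon_cross s p q1) @ ribbon_cross (s + q1) p q2)"
    using braid_eq_append_left[OF Suc.IH, of "X1 @ X2"] Suc.prems valid by simp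
  also have "braid_eq M ... (X1 @ (ribbon_cross s p q1 @ X2) @ ribbon_cross (s + q1) p q2)"
  proof (intro braid_eq.cong)
    show "braid_eq M (X2 @ ribbon_cross s p q1) (ribbon_cross s p q1 @ X2)"
      unfolding X2_def using Suc.prems
      by (intro braid_eq_commute[OF positive_word_on_strand_cross positive_word_on_ribbon_cross])
        (auto simp: far_apart_def)
  qed (use valid in auto)
  also have "... = ribbon_cross s (Suc p) q1 @ ribbon_cross (s + q1) (Suc p) q2"
    by (simp add: X1_def X2_def ribbon_cross_Suc add.assoc add.commute add.left_commute)
  finally show ?case .
qed

lemma ribbon_cross_two_natural:
  assumes "a + q + 2 \<le> M"
  shows "braid_eq M ((a + 1, True) # ribbon_cross a 2 q) (ribbon_cross a 2 q @ [(a + q + 1, True)])"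
  using assms
proof (induction q)
  case 0
  then show ?case by (auto intro: braid_eq.refl)
next
  case (Suc q)
  define X Y i where "X = strand_cross (a + 1) q" and "Y = strand_cross a q" and "i = a + q + 1"
  have two: "ribbon_cross a 2 r = strand_cross (a + 1) r @ strand_cross a r" for r
    by (simp add: numeral_2_eq_2 ribbon_cross_Suc)
  have valid: "valid_word M X" "valid_word M Y" "1 \<le> i" "i + 2 \<le> M"
    unfolding X_def Y_def i_def using Suc.prems
    by (auto intro!: positive_word_on_valid[OF positive_word_on_strand_cross])
  have slide: "braid_eq M ((i + 1, True) # Y) (Y @ [(i + 1, True)])"
    unfolding Y_def i_def using Suc.prems
    by (intro braid_eq_commute_letter[OF positive_word_on_strand_cross]) (auto simp: far_apart_def)
  have "(a + 1, True) # ribbon_cross a 2 (Suc q) = ((a + 1, True) # X) @ ((i + 1, True) # Y) @ [(i, True)]"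
    by (simp add: two X_def Y_def i_def strand_cross_Suc)
  also have "braid_eq M ... (((a + 1, True) # X) @ (Y @ [(i + 1, True)]) @ [(i, True)])"
    using slide valid Suc.prems by (intro braid_eq.cong) auto
  also have "... = ((a + 1, True) # ribbon_cross a 2 q) @ [(i + 1, True), (i, True)]"
    by (simp add: two X_def Y_def)
  also have "braid_eq M ... ((X @ Y @ [(i, True)]) @ [(i + 1, True), (i, True)])"
    using Suc valid by (intro braid_eq_append_right) (simp_all add: two X_def Y_def i_def)
  also have "... = (X @ Y) @ [(i, True), (i + 1, True), (i, True)] @ []"
    by simp
  also have "braid_eq M ... ((X @ Y) @ [(i + 1, True), (i, True), (i + 1, True)] @ [])"
    using valid by (intro braid_eq.cong braid_eq.braid_rel) auto
  also have "... = X @ (Y @ [(i + 1, True)]) @ [(i, True), (i + 1, True)]"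
    by simp
  also have "braid_eq M ... (X @ ((i + 1, True) # Y) @ [(i, True), (i + 1, True)])"
    using braid_eq.sym[OF slide] valid by (intro braid_eq.cong) auto
  also have "... = ribbon_cross a 2 (Suc q) @ [(a + Suc q + 1, True)]"
    by (simp add: two X_def Y_def i_def strand_cross_Suc)
  finally show ?case .
qed

lemma ribbon_cross_natural_letter:
  assumes "s < i" "i < s + p" "s + p + q \<le> M"
  shows "braid_eq M ((i, True) # ribbon_cross s p q) (ribbon_cross s p q @ [(i + q, True)])"
proof -
  define j r where "j = i - s - 1" and "r = p - j - 2"
  have i: "i = s + j + 1" and p: "p = j + (2 + r)"
    using assms unfolding j_def r_def by auto
  define Z T W where "Z = ribbon_cross (s + j + 2) r q" and "T = ribbon_cross (s + j) 2 q"
    and "W = ribbon_cross s j q"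
  have decomp: "ribbon_cross s p q = Z @ T @ W"
    unfolding p ribbon_cross_add[of s j] ribbon_cross_add[of "s + j" 2] Z_def T_def W_def by simp
  have valid: "valid_word M Z" "valid_word M T" "valid_word M W"
    unfolding Z_def T_def W_def using assms(3) by (auto intro!: ribbon_cross_valid simp: p)
  have "(i, True) # ribbon_cross s p q = ((i, True) # Z) @ T @ W"
    by (simp add: decomp)
  also have "braid_eq M ... ((Z @ [(i, True)]) @ T @ W)"
  proof (intro braid_eq_append_right)
    show "braid_eq M ((i, True) # Z) (Z @ [(i, True)])"
      unfolding Z_def using assms(3)
      by (intro braid_eq_commute_letter[OF positive_word_on_ribbon_cross]) (auto simp: far_apart_def i p)
  qed (use valid in auto)
  also have "... = Z @ ((i, True) # T) @ W"
    by simp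
  also have "braid_eq M ... (Z @ (T @ [(i + q, True)]) @ W)"
    using ribbon_cross_two_natural[of "s + j" q M] assms(3) valid
    by (intro braid_eq.cong) (simp_all add: T_def i p add.assoc)
  also have "... = (Z @ T) @ ((i + q, True) # W)"
    by simp
  also have "braid_eq M ... ((Z @ T) @ (W @ [(i + q, True)]))"
  proof (intro braid_eq_append_left)
    show "braid_eq M ((i + q, True) # W) (W @ [(i + q, True)])"
      unfolding W_def using assms(3)
      by (intro braid_eq_commute_letter[OF positive_word_on_ribbon_cross]) (auto simp: far_apart_def i p)
  qed (use valid in auto)
  also have "... = ribbon_cross s p q @ [(i + q, True)]"
    by (simp add: decomp)
  finally show ?thesis .
qed

lemma shift_word_Nil [simp]: "shift_word d [] = []"
  by (simp add: shift_word_def)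

lemma shift_word_Cons [simp]: "shift_word d ((i, b) # w) = (i + d, b) # shift_word d w"
  by (simp add: shift_word_def)

lemma shift_word_append [simp]: "shift_word d (u @ v) = shift_word d u @ shift_word d v"
  by (simp add: shift_word_def)

lemma shift_strand_cross: "shift_word d (strand_cross a q) = strand_cross (a + d) q"
  by (simp add: shift_word_def strand_cross_def)

lemma shift_ribbon_cross: "shift_word d (ribbon_cross s p q) = ribbon_cross (s + d) p q"
  by (induction p) (simp_all add: ribbon_cross_Suc shift_strand_cross add.commute add.left_commute)

lemma positive_word_on_shift:
  "positive_word_on A w \<Longrightarrow> positive_word_on ((\<lambda>i. i + d) ` A) (shift_word d w)"
  by (auto simp: positive_word_on_def shift_word_def)

lemma ribbon_cross_natural:
  assumes "positive_word_on {s<..<s+p} w" "s + p + q \<le> M"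
  shows "braid_eq M (w @ ribbon_cross s p q) (ribbon_cross s p q @ shift_word q w)"
  using assms(1)
proof (induction w)
  case Nil
  then show ?case
    using assms(2) by (auto intro: braid_eq.refl ribbon_cross_valid)
next
  case (Cons l w)
  then obtain i where l: "l = (i, True)" and i: "s < i" "i < s + p"
    by (cases l) auto
  have "positive_word_on {s<..<s+p} w"
    using Cons.prems by simp
  then have valid_shift: "valid_word M (shift_word q w)"
    using assms(2) by (intro positive_word_on_valid[OF positive_word_on_shift]) auto
  have "braid_eq M ((i, True) # w @ ribbon_cross s p q) ((i, True) # ribbon_cross s p q @ shift_word q w)"
    using braid_eq_append_left[OF Cons.IH, of "[(i, True)]"] Cons.prems i assms(2) by (simp add: l)
  also have "braid_eq M ... ((ribbon_cross s p q @ [(i + q, True)]) @ shift_word q w)"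
    using braid_eq_append_right[OF ribbon_cross_natural_letter[OF i assms(2)] valid_shift] by simp
  finally show ?case
    using l by simp
qed

lemma ribbon_cross_yang_baxter:
  assumes "s + p + q + r \<le> M"
  shows "braid_eq M (ribbon_cross s p q @ ribbon_cross (s + q) p r @ ribbon_cross s q r)
                    (ribbon_cross (s + p) q r @ ribbon_cross s p r @ ribbon_cross (s + r) p q)"
proof -
  have "ribbon_cross (s + q) p r @ ribbon_cross s q r = ribbon_cross s (p + q) r"
    using ribbon_cross_add[of s q p r] by (simp add: add.commute)
  moreover have "ribbon_cross s (p + q) r = ribbon_cross (s + p) q r @ ribbon_cross s p r"
    by (rule ribbon_cross_add)
  moreover have "braid_eq M (ribbon_cross s p q @ ribbon_cross s (p + q) r)
      (ribbon_cross s (p + q) r @ shift_word r (ribbon_cross s p q))"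
    using assms by (intro ribbon_cross_natural positive_word_on_mono[OF positive_word_on_ribbon_cross]) auto
  ultimately show ?thesis
    by (simp add: shift_ribbon_cross)
qed


fun widths_after :: "bword \<Rightarrow> nat list \<Rightarrow> nat list" where
  "widths_after [] ws = ws"
| "widths_after (l # w) ws = widths_after w (swap_widths ws (fst l))"

lemma widths_after_append: "widths_after (u @ v) ws = widths_after v (widths_after u ws)"
  by (induction u arbitrary: ws) auto

lemma cable_append: "cable (u @ v) ws = cable u ws @ cable v (widths_after u ws)"
  by (induction u arbitrary: ws) auto

lemma swap_widths_append:
  "length xs + 1 = i \<Longrightarrow> swap_widths (xs @ w # y # zs) i = xs @ y # w # zs"
  by (auto simp: swap_widths_def list_update_append nth_append)

lemma letter_cable_positive:
  "letter_cable (xs @ p # q # zs) (length xs + 1, True) = ribbon_cross (sum_list xs) p q"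
  by (simp add: letter_cable_def nth_append)

lemma widths_after_strand_cross:
  "widths_after (strand_cross (length xs) (length ys)) (xs @ w # ys @ zs) = xs @ ys @ w # zs"
proof (induction ys arbitrary: zs rule: rev_induct)
  case (snoc y ys)
  then show ?case
    by (simp add: strand_cross_Suc widths_after_append swap_widths_append[of "xs @ ys", simplified])
qed simp

lemma cable_strand_cross:
  assumes "sum_list (xs @ w # ys @ zs) \<le> M"
  shows "braid_eq M (cable (strand_cross (length xs) (length ys)) (xs @ w # ys @ zs))
                    (ribbon_cross (sum_list xs) w (sum_list ys))"
  using assms
proof (induction ys arbitrary: zs rule: rev_induct)
  case Nil
  then show ?case by (simp add: braid_eq.refl)
next
  case (snoc y ys)
  have "cable (strand_cross (length xs) (length (ys @ [y]))) (xs @ w # (ys @ [y]) @ zs)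
      = cable (strand_cross (length xs) (length ys)) (xs @ w # ys @ y # zs)
        @ ribbon_cross (sum_list xs + sum_list ys) w y"
    using widths_after_strand_cross[of xs ys w "y # zs"]
    by (simp add: strand_cross_Suc cable_append letter_cable_positive[of "xs @ ys", simplified])
  also have "braid_eq M ...
      (ribbon_cross (sum_list xs) w (sum_list ys) @ ribbon_cross (sum_list xs + sum_list ys) w y)"
    using snoc.IH[of "y # zs"] snoc.prems by (intro braid_eq_append_right ribbon_cross_valid) simp_all
  also have "braid_eq M ... (ribbon_cross (sum_list xs) w (sum_list (ys @ [y])))"
    using braid_eq.sym[OF ribbon_cross_split_right[of "sum_list xs" w "sum_list ys" y M]] snoc.prems
    by simp
  finally show ?case .
qed

lemma widths_after_ribbon_cross:
  "widths_after (ribbon_cross (length xs) (length ys) (length zs)) (xs @ ys @ zs @ us) = xs @ zs @ ys @ us"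
proof (induction ys arbitrary: us rule: rev_induct)
  case (snoc y ys)
  then show ?case
    using widths_after_strand_cross[of "xs @ ys" zs y us]
    by (simp add: ribbon_cross_Suc widths_after_append)
qed simp

lemma cable_ribbon_cross:
  assumes "sum_list (xs @ ys @ zs @ us) \<le> M"
  shows "braid_eq M (cable (ribbon_cross (length xs) (length ys) (length zs)) (xs @ ys @ zs @ us))
                    (ribbon_cross (sum_list xs) (sum_list ys) (sum_list zs))"
  using assms
proof (induction ys arbitrary: us rule: rev_induct)
  case Nil
  then show ?case by (simp add: braid_eq.refl)
next
  case (snoc y ys)
  have "cable (ribbon_cross (length xs) (length (ys @ [y])) (length zs)) (xs @ (ys @ [y]) @ zs @ us)
      = cable (strand_cross (length (xs @ ys)) (length zs)) ((xs @ ys) @ y # zs @ us)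
        @ cable (ribbon_cross (length xs) (length ys) (length zs)) (xs @ ys @ zs @ y # us)"
    using widths_after_strand_cross[of "xs @ ys" zs y us]
    by (simp add: ribbon_cross_Suc cable_append)
  also have "braid_eq M ...
      (ribbon_cross (sum_list (xs @ ys)) y (sum_list zs)
        @ ribbon_cross (sum_list xs) (sum_list ys) (sum_list zs))"
    using snoc by (intro braid_eq_append cable_strand_cross) auto
  also have "... = ribbon_cross (sum_list xs) (sum_list (ys @ [y])) (sum_list zs)"
    by (simp add: ribbon_cross_add)
  finally show ?case .
qed

lemma ribbon_cross_derived_identity:
  fixes k d :: nat
  defines "m \<equiv> k + d"
  assumes "6 * k + 3 * d \<le> M"
  shows "braid_eq M (ribbon_cross k m m @ ribbon_cross (2 * k) (2 * m) m)
                    (ribbon_cross (2 * k + m) m m @ ribbon_cross k m (2 * m))"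
proof -
  define K P Q A B B' A' Q'
    where "K = ribbon_cross (k + 2 * m) k m" and "P = ribbon_cross k m k"
      and "Q = ribbon_cross (2 * k) m d" and "A = ribbon_cross (2 * k + d) m m"
      and "B = ribbon_cross (2 * k) d m" and "B' = ribbon_cross (2 * k + m) d m"
      and "A' = ribbon_cross (2 * k) m m" and "Q' = ribbon_cross (2 * k + m) m d"
  note index_arith = m_def mult_2 mult_2_right ac_simps
  have valid: "valid_word M w" if "w \<in> {K, P, Q, A, B, A', B', Q', ribbon_cross k m m}" for w
    using that assms by (auto intro!: ribbon_cross_valid simp: m_def K_def P_def Q_def A_def B_def
        A'_def B'_def Q'_def)
  have "2 * m = d + (m + k)"
    by (simp add: m_def)
  then have "ribbon_cross k m m @ ribbon_cross (2 * k) (2 * m) m = ribbon_cross k m m @ K @ A @ B"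
    by (simp only: ribbon_cross_add) (simp add: K_def A_def B_def index_arith)
  also have "braid_eq M ... (K @ ribbon_cross k m m @ A @ B)"
  proof -
    have "braid_eq M (ribbon_cross k m m @ K) (K @ ribbon_cross k m m)"
      unfolding K_def using assms
      by (intro braid_eq_commute[OF positive_word_on_ribbon_cross positive_word_on_ribbon_cross])
        (auto simp: far_apart_def m_def)
    then have "braid_eq M ((ribbon_cross k m m @ K) @ A @ B) ((K @ ribbon_cross k m m) @ A @ B)"
      using valid by (intro braid_eq_append_right) auto
    then show ?thesis
      by simp
  qed
  also have "braid_eq M ... (K @ (P @ Q) @ A @ B)"
  proof (rule braid_eq.cong)
    show "braid_eq M (ribbon_cross k m m) (P @ Q)"
      using ribbon_cross_split_right[of k m k d M] assms by (simp add: P_def Q_def index_arith)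
  qed (use valid in auto)
  also have "... = (K @ P) @ (Q @ A @ B) @ []"
    by simp
  also have "braid_eq M ... ((K @ P) @ (B' @ A' @ Q') @ [])"
  proof (rule braid_eq.cong)
    show "braid_eq M (Q @ A @ B) (B' @ A' @ Q')"
      using ribbon_cross_yang_baxter[of "2 * k" m d m M] assms
      by (simp add: Q_def A_def B_def A'_def B'_def Q'_def index_arith)
  qed (use valid in auto)
  also have "... = K @ (P @ B') @ A' @ Q'"
    by simp
  also have "braid_eq M ... (K @ (B' @ P) @ A' @ Q')"
  proof -
    have "braid_eq M (P @ B') (B' @ P)"
      unfolding P_def B'_def using assms
      by (intro braid_eq_commute[OF positive_word_on_ribbon_cross positive_word_on_ribbon_cross])
        (auto simp: far_apart_def m_def)
    then show ?thesis
      by (rule braid_eq.cong) (use valid in auto)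
  qed
  also have "... = (K @ B') @ P @ A' @ Q'"
    by simp
  also have "braid_eq M ... ((K @ B') @ ribbon_cross k m (2 * m))"
  proof -
    have "braid_eq M (ribbon_cross k m (k + (m + d))) (P @ ribbon_cross (2 * k) m (m + d))"
      using ribbon_cross_split_right[of k m k "m + d" M] assms by (simp add: P_def index_arith)
    also have "braid_eq M ... (P @ A' @ Q')"
      using ribbon_cross_split_right[of "2 * k" m m d M] assms valid
      by (intro braid_eq_append_left) (simp_all add: A'_def Q'_def index_arith)
    finally have "braid_eq M (ribbon_cross k m (2 * m)) (P @ A' @ Q')"
      by (simp add: index_arith)
    then show ?thesis
      using valid by (intro braid_eq_append_left[OF braid_eq.sym]) simp_all
  qed
  also have "K @ B' = ribbon_cross (2 * k + m) m m"
    using ribbon_cross_add[of "2 * k + m" d k m] by (simp add: K_def B'_def index_arith)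
  finally show ?thesis .
qed

lemma left_derived_ribbon_cross:
  "braid_eq (3 * (k + m)) (left_derived (k + m) (ribbon_cross k m m))
                          (ribbon_cross k m m @ ribbon_cross (2 * k) (2 * m) m)"
proof -
  have "replicate (k + m) 2 @ replicate (k + m) 1
      = replicate k (2 :: nat) @ replicate m 2 @ replicate m 1 @ replicate k 1"
    using replicate_add[of k m "2 :: nat"] replicate_add[of m k "1 :: nat"] by (simp add: add.commute)
  then have "braid_eq (3 * (k + m))
      (cable (ribbon_cross k m m) (replicate (k + m) 2 @ replicate (k + m) 1))
      (ribbon_cross (2 * k) (2 * m) m)"
    using cable_ribbon_cross[of "replicate k 2" "replicate m 2" "replicate m 1" "replicate k 1"]
    by (simp add: sum_list_replicate mult.commute)
  then show ?thesis
    unfolding left_derived_def by (intro braid_eq_append_left ribbon_cross_valid) simp_all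
qed

lemma right_derived_ribbon_cross:
  "braid_eq (3 * (k + m)) (right_derived (k + m) (ribbon_cross k m m))
                          (ribbon_cross (2 * k + m) m m @ ribbon_cross k m (2 * m))"
proof -
  have shift: "shift_word (k + m) (ribbon_cross k m m) = ribbon_cross (2 * k + m) m m"
    by (simp add: shift_ribbon_cross mult_2 add.assoc)
  have "replicate (k + m) 1 @ replicate (k + m) 2
      = replicate k (1 :: nat) @ replicate m 1 @ replicate m 2 @ replicate k 2"
    using replicate_add[of k m "1 :: nat"] replicate_add[of m k "2 :: nat"] by (simp add: add.commute)
  then have "braid_eq (3 * (k + m))
      (cable (ribbon_cross k m m) (replicate (k + m) 1 @ replicate (k + m) 2))
      (ribbon_cross k m (2 * m))"
    using cable_ribbon_cross[of "replicate k 1" "replicate m 1" "replicate m 2" "replicate k 2"]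
    by (simp add: sum_list_replicate mult.commute)
  then show ?thesis
    unfolding right_derived_def shift by (intro braid_eq_append_left ribbon_cross_valid) simp_all
qed

lemma dpc_eq_ribbon_cross: "dpc n k = ribbon_cross k (n - k) (n - k)"
  by (simp add: dpc_def letter_cable_def)

theorem proposition1:
  fixes n k :: nat
  assumes "1 \<le> n" and "k \<le> n div 2"
  shows "braid_eq (3 * n) (left_derived n (dpc n k)) (right_derived n (dpc n k))"
proof -
  define d m where "d = n - 2 * k" and "m = n - k"
  have n: "n = k + m" and m: "m = k + d"
    using assms(2) unfolding d_def m_def by auto
  have "braid_eq (3 * n) (left_derived n (dpc n k)) (ribbon_cross k m m @ ribbon_cross (2 * k) (2 * m) m)"
    using left_derived_ribbon_cross[of k m] by (simp add: dpc_eq_ribbon_cross n)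
  also have "braid_eq (3 * n) ... (ribbon_cross (2 * k + m) m m @ ribbon_cross k m (2 * m))"
    using ribbon_cross_derived_identity[of k d "3 * n"] by (simp add: n m)
  also have "braid_eq (3 * n) ... (right_derived n (dpc n k))"
    using braid_eq.sym[OF right_derived_ribbon_cross[of k m]] by (simp add: dpc_eq_ribbon_cross n)
  finally show ?thesis .
qed

end
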